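(* Let $N_\mathrm{t},N_\mathrm{r}\ge1$, let $\mathbf{H}\in\mathbb{C}^{N_\mathrm{r}\times N_\mathrm{t}}$ have i.i.d. $\mathcal{CN}(0,1)$ entries, and let $\check{\mathbf{x}}_1,\dots,\check{\mathbf{x}}_K$, $K=2^{N_\mathrm{t}}$, be the distinct elements of $\{-1,+1\}^{N_\mathrm{t}}$. Consider the noiseless one-bit model (the limit of infinite SNR): an index $k$ is drawn uniformly from $\{1,\dots,K\}$ independently of $\mathbf{H}$, the receiver observes $\mathbf{y}=\operatorname{sign}(\mathbf{H}\check{\mathbf{x}}_k)$, knows the true representative vectors $\check{\mathbf{y}}_m=\operatorname{sign}(\mathbf{H}\check{\mathbf{x}}_m)$, $m=1,\dots,K$, and outputs an index chosen uniformly at random among the minimizers of $m\mapsto\|\mathbf{y}-\check{\mathbf{y}}_m\|_2$. Let $P^{\mathrm{ver}}_{\rho\to\infty}$ be the probability that the output differs from $k$. Then $$P^{\mathrm{ver}}_{\rho\to\infty}\le\frac12\sum_{d=1}^{N_\mathrm{t}}\binom{N_\mathrm{t}}{d}\left[\frac{2}{\pi}\arctan\sqrt{\frac{N_\mathrm{t}-d}{d}}\right]^{2N_\mathrm{r}}.$$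
   Context: For real $a$, $\operatorname{sign}(a)=+1$ if $a\ge0$ and $-1$ if $a<0$; for complex $a$, $\operatorname{sign}(a)=\operatorname{sign}(\Re\{a\})+j\operatorname{sign}(\Im\{a\})$; on vectors it acts element-wise. *)

theory Defs
  imports "HOL-Probability.Probability"
begin

definition rsign :: "real \<Rightarrow> real" where
  "rsign a = (if a \<ge> 0 then 1 else -1)"

definition csign :: "complex \<Rightarrow> complex" where
  "csign z = Complex (rsign (Re z)) (rsign (Im z))"

definition CN01 :: "complex measure" where
  "CN01 = distr (density lborel (normal_density 0 (sqrt (1/2)))
                 \<Otimes>\<^sub>M density lborel (normal_density 0 (sqrt (1/2))))
               borel (\<lambda>(a, b). Complex a b)"

definition chan_measure :: "nat \<Rightarrow> nat \<Rightarrow> (nat \<times> nat \<Rightarrow> complex) measure" where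
  "chan_measure Nr Nt = PiM ({..<Nr} \<times> {..<Nt}) (\<lambda>_. CN01)"

definition bpsk_set :: "nat \<Rightarrow> (nat \<Rightarrow> real) set" where
  "bpsk_set Nt = {x. (\<forall>j<Nt. x j = 1 \<or> x j = -1) \<and> (\<forall>j\<ge>Nt. x j = 0)}"

definition onebit_out :: "nat \<Rightarrow> nat \<Rightarrow> (nat \<times> nat \<Rightarrow> complex) \<Rightarrow> (nat \<Rightarrow> real) \<Rightarrow> nat \<Rightarrow> complex" where
  "onebit_out Nr Nt H x = (\<lambda>i. csign (\<Sum>j<Nt. H (i, j) * of_real (x j)))"

definition vdist :: "nat \<Rightarrow> (nat \<Rightarrow> complex) \<Rightarrow> (nat \<Rightarrow> complex) \<Rightarrow> real" where
  "vdist Nr u v = sqrt (\<Sum>i<Nr. (cmod (u i - v i))\<^sup>2)"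

definition minimizers :: "nat \<Rightarrow> nat \<Rightarrow> (nat \<times> nat \<Rightarrow> complex) \<Rightarrow> (nat \<Rightarrow> complex) \<Rightarrow> (nat \<Rightarrow> real) set" where
  "minimizers Nr Nt H y = {m \<in> bpsk_set Nt. \<forall>m' \<in> bpsk_set Nt.
       vdist Nr y (onebit_out Nr Nt H m) \<le> vdist Nr y (onebit_out Nr Nt H m')}"

text \<open>Conditional probability (given H and true vector x) that the decoder, which
picks uniformly at random among the minimizers, outputs something other than x.\<close>
definition cond_err :: "nat \<Rightarrow> nat \<Rightarrow> (nat \<times> nat \<Rightarrow> complex) \<Rightarrow> (nat \<Rightarrow> real) \<Rightarrow> real" where
  "cond_err Nr Nt H x =
     (let A = minimizers Nr Nt H (onebit_out Nr Nt H x)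
      in 1 - (if x \<in> A then 1 / real (card A) else 0))"

definition P_ver_inf :: "nat \<Rightarrow> nat \<Rightarrow> ennreal" where
  "P_ver_inf Nr Nt = (\<integral>\<^sup>+ H. ennreal ((1 / real (card (bpsk_set Nt))) *
        (\<Sum>x\<in>bpsk_set Nt. cond_err Nr Nt H x)) \<partial>chan_measure Nr Nt)"

end

theory Submission
  imports Defs "HOL-Real_Asymp.Real_Asymp"
begin

text \<open>
  The decoder picks uniformly among the indices whose representative vector equals the
  observation, so given \<open>H\<close> and the true vector \<open>x\<close> it errs with probability
  \<open>1 - 1/(1 + n) \<le> n/2\<close>, where \<open>n\<close> counts the other BPSK vectors \<open>m\<close> with
  \<open>sign(Hx) = sign(Hm)\<close>. It therefore suffices to bound the probability of such a collision
  for a fixed pair \<open>x \<noteq> m\<close> at Hamming distance \<open>d\<close>.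

  Splitting \<open>H\<close> into real and imaginary parts gives \<open>2N\<^sub>r\<close> independent real rows \<open>h\<close>
  with i.i.d. \<open>N(0,1/2)\<close> entries. Writing \<open>h\<cdot>x = U + V\<close> with \<open>U\<close> the sum over coordinates
  where \<open>x\<close> and \<open>m\<close> agree and \<open>V\<close> over those where they differ, we get \<open>h\<cdot>m = U - V\<close>,
  and equal signs force \<open>|V| \<le> |U|\<close>. Here \<open>U\<close> and \<open>V\<close> are independent centred normals of
  variances \<open>(N\<^sub>t - d)/2\<close> and \<open>d/2\<close>, and by rotational invariance of the planar Gaussian
  \<open>P(|V| \<le> |U|) = (2/\<pi>) arctan (\<sigma>\<^sub>U/\<sigma>\<^sub>V)\<close>. Raising this to the power \<open>2N\<^sub>r\<close> and counting the
  \<open>N\<^sub>t choose d\<close> vectors at distance \<open>d\<close> yields the bound.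
\<close>

section \<open>Gaussian integrals and the arctangent law\<close>

lemma nn_integral_gauss_half_line:
  fixes k :: real assumes k: "k > 0"
  shows "(\<integral>\<^sup>+x. ennreal (x * exp (- (k * x\<^sup>2) / 2)) * indicator {0..} x \<partial>lborel) = ennreal (1 / k)"
proof -
  have "((\<lambda>x::real. - exp (- (k * x\<^sup>2) / 2) / k) \<longlongrightarrow> 0) at_top"
    using k by real_asymp
  then have "(\<integral>\<^sup>+x. ennreal (x * exp (- (k * x\<^sup>2) / 2)) * indicator {0..} x \<partial>lborel)
      = 0 - (- exp (- (k * 0\<^sup>2) / 2) / k)"
    by (intro nn_integral_FTC_atLeast) (use k in \<open>auto intro!: derivative_eq_intros simp: field_simps\<close>)
  then show ?thesis by simp
qed

lemma nn_integral_abs_gauss: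
  fixes k :: real assumes k: "k > 0"
  shows "(\<integral>\<^sup>+x. ennreal (\<bar>x\<bar> * exp (- (k * x\<^sup>2) / 2)) \<partial>lborel) = ennreal (2 / k)"
proof -
  let ?f = "\<lambda>x::real. ennreal (\<bar>x\<bar> * exp (- (k * x\<^sup>2) / 2))"
  have half: "(\<integral>\<^sup>+x. ?f x * indicator {0..} x \<partial>lborel) = ennreal (1 / k)"
  proof -
    have "(\<integral>\<^sup>+x. ?f x * indicator {0..} x \<partial>lborel)
        = (\<integral>\<^sup>+x. ennreal (x * exp (- (k * x\<^sup>2) / 2)) * indicator {0..} x \<partial>lborel)"
      by (intro nn_integral_cong) (auto split: split_indicator)
    then show ?thesis using nn_integral_gauss_half_line[OF k] by simp
  qed
  have "(\<integral>\<^sup>+x. ?f x \<partial>lborel) = (\<integral>\<^sup>+x. ?f x * indicator {0..} x + ?f x * indicator {..<0} x \<partial>lborel)"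
    by (intro nn_integral_cong) (auto split: split_indicator)
  also have "\<dots> = (\<integral>\<^sup>+x. ?f x * indicator {0..} x \<partial>lborel) + (\<integral>\<^sup>+x. ?f x * indicator {..<0} x \<partial>lborel)"
    by (rule nn_integral_add) auto
  also have "(\<integral>\<^sup>+x. ?f x * indicator {..<0} x \<partial>lborel)
      = ennreal \<bar>-1::real\<bar> * (\<integral>\<^sup>+x. ?f (0 + -1 * x) * indicator {..<0} (0 + -1 * x) \<partial>lborel)"
    by (rule nn_integral_real_affine) auto
  also have "\<dots> = (\<integral>\<^sup>+x. ?f x * indicator {0..} x \<partial>lborel)"
    by (simp, intro nn_integral_cong) (auto split: split_indicator)
  finally show ?thesis using half k by (simp add: ennreal_plus[symmetric] del: ennreal_plus)
qed

lemma nn_integral_arctan_deriv_Icc: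
  fixes c :: real assumes c: "c \<ge> 0"
  shows "(\<integral>\<^sup>+s. ennreal (2 / (1 + s\<^sup>2)) * indicator {-c..c} s \<partial>lborel) = ennreal (4 * arctan c)"
proof -
  have "(\<integral>\<^sup>+s. ennreal (2 / (1 + s\<^sup>2)) * indicator {-c..c} s \<partial>lborel) = ennreal (2 * arctan c - 2 * arctan (-c))"
    by (rule nn_integral_FTC_Icc[where F="\<lambda>x. 2 * arctan x"])
       (use c in \<open>auto intro!: derivative_eq_intros simp: field_simps add_pos_nonneg\<close>)
  then show ?thesis by (simp add: arctan_minus)
qed

text \<open>Substituting \<open>y = x s\<close> turns the double cone into the strip \<open>|s| \<le> c\<close>, and the inner
  integral over \<open>x\<close> becomes \<open>2/(1 + s\<^sup>2)\<close>.\<close>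

lemma nn_integral_gauss_double_cone:
  fixes c :: real assumes c: "c \<ge> 0"
  shows "(\<integral>\<^sup>+x. \<integral>\<^sup>+y. ennreal (exp (- (x\<^sup>2 + y\<^sup>2) / 2)) * indicator {-(c*\<bar>x\<bar>)..c*\<bar>x\<bar>} y \<partial>lborel \<partial>lborel)
         = ennreal (4 * arctan c)"
proof -
  let ?F = "\<lambda>x s. ennreal (\<bar>x\<bar> * exp (- ((1 + s\<^sup>2) * x\<^sup>2) / 2)) * indicator {-c..c} s"
  have inner: "(\<integral>\<^sup>+y. ennreal (exp (- (x\<^sup>2 + y\<^sup>2) / 2)) * indicator {-(c*\<bar>x\<bar>)..c*\<bar>x\<bar>} y \<partial>lborel)
      = (\<integral>\<^sup>+s. ?F x s \<partial>lborel)" if x: "x \<noteq> 0" for x :: real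
  proof -
    have "(\<integral>\<^sup>+y. ennreal (exp (- (x\<^sup>2 + y\<^sup>2) / 2)) * indicator {-(c*\<bar>x\<bar>)..c*\<bar>x\<bar>} y \<partial>lborel)
       = ennreal \<bar>x\<bar> * (\<integral>\<^sup>+s. ennreal (exp (- (x\<^sup>2 + (0 + x * s)\<^sup>2) / 2))
           * indicator {-(c*\<bar>x\<bar>)..c*\<bar>x\<bar>} (0 + x * s) \<partial>lborel)"
      by (rule nn_integral_real_affine) (use x in auto)
    also have "\<dots> = (\<integral>\<^sup>+s. ennreal \<bar>x\<bar> * (ennreal (exp (- (x\<^sup>2 + (0 + x * s)\<^sup>2) / 2))
           * indicator {-(c*\<bar>x\<bar>)..c*\<bar>x\<bar>} (0 + x * s)) \<partial>lborel)"
      by (rule nn_integral_cmult[symmetric]) auto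
    also have "\<dots> = (\<integral>\<^sup>+s. ?F x s \<partial>lborel)"
    proof (intro nn_integral_cong)
      fix s :: real
      have "\<bar>x * s\<bar> \<le> c * \<bar>x\<bar> \<longleftrightarrow> \<bar>s\<bar> \<le> c" using x by (simp add: abs_mult mult.commute)
      then have strip: "(-(c*\<bar>x\<bar>) \<le> x * s \<and> x * s \<le> c*\<bar>x\<bar>) = (-c \<le> s \<and> s \<le> c)"
        by (auto simp: abs_le_iff)
      have "x\<^sup>2 + (0 + x * s)\<^sup>2 = (1 + s\<^sup>2) * x\<^sup>2" by (simp add: algebra_simps power2_eq_square)
      then show "ennreal \<bar>x\<bar> * (ennreal (exp (- (x\<^sup>2 + (0 + x * s)\<^sup>2) / 2))
          * indicator {-(c*\<bar>x\<bar>)..c*\<bar>x\<bar>} (0 + x * s)) = ?F x s"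
        using strip by (auto simp: indicator_def ennreal_mult[symmetric])
    qed
    finally show ?thesis .
  qed
  have "(\<integral>\<^sup>+x. \<integral>\<^sup>+y. ennreal (exp (- (x\<^sup>2 + y\<^sup>2) / 2)) * indicator {-(c*\<bar>x\<bar>)..c*\<bar>x\<bar>} y \<partial>lborel \<partial>lborel)
     = (\<integral>\<^sup>+x. \<integral>\<^sup>+s. ?F x s \<partial>lborel \<partial>lborel)"
    by (rule nn_integral_cong_AE, rule AE_I[where N="{0}"]) (use inner in auto)
  also have "\<dots> = (\<integral>\<^sup>+s. \<integral>\<^sup>+x. ?F x s \<partial>lborel \<partial>lborel)"
    by (rule lborel_pair.Fubini') simp
  also have "\<dots> = (\<integral>\<^sup>+s. ennreal (2 / (1 + s\<^sup>2)) * indicator {-c..c} s \<partial>lborel)"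
  proof (intro nn_integral_cong)
    fix s :: real
    have "(\<integral>\<^sup>+x. ?F x s \<partial>lborel)
        = (\<integral>\<^sup>+x. ennreal (\<bar>x\<bar> * exp (- ((1 + s\<^sup>2) * x\<^sup>2) / 2)) \<partial>lborel) * indicator {-c..c} s"
      by (rule nn_integral_multc) auto
    also have "\<dots> = ennreal (2 / (1 + s\<^sup>2)) * indicator {-c..c} s"
      using nn_integral_abs_gauss[of "1 + s\<^sup>2"] by (simp add: add_pos_nonneg)
    finally show "(\<integral>\<^sup>+x. ?F x s \<partial>lborel) = ennreal (2 / (1 + s\<^sup>2)) * indicator {-c..c} s" .
  qed
  also have "\<dots> = ennreal (4 * arctan c)" by (rule nn_integral_arctan_deriv_Icc[OF c])
  finally show ?thesis .
qed
lemma nn_integral_std_normal_double_cone: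
  fixes c :: real assumes c: "c \<ge> 0"
  shows "(\<integral>\<^sup>+x. \<integral>\<^sup>+y. ennreal (std_normal_density x) * ennreal (std_normal_density y)
      * indicator {-(c*\<bar>x\<bar>)..c*\<bar>x\<bar>} y \<partial>lborel \<partial>lborel) = ennreal ((2/pi) * arctan c)"
proof -
  have [measurable]: "Measurable.pred (borel \<Otimes>\<^sub>M borel) (\<lambda>z::real\<times>real. snd z \<in> {-(c*\<bar>fst z\<bar>)..c*\<bar>fst z\<bar>})"
    unfolding atLeastAtMost_iff by measurable
  have "ennreal (std_normal_density x) * ennreal (std_normal_density y)
      = ennreal (1 / (2*pi)) * ennreal (exp (- (x\<^sup>2 + y\<^sup>2) / 2))" for x y
  proof -
    have "std_normal_density x * std_normal_density y = 1 / (2*pi) * exp (- (x\<^sup>2 + y\<^sup>2) / 2)"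
      by (simp add: std_normal_density_def mult_exp_exp field_simps real_sqrt_mult[symmetric])
    then show ?thesis by (simp add: ennreal_mult[symmetric])
  qed
  then have "(\<integral>\<^sup>+x. \<integral>\<^sup>+y. ennreal (std_normal_density x) * ennreal (std_normal_density y)
      * indicator {-(c*\<bar>x\<bar>)..c*\<bar>x\<bar>} y \<partial>lborel \<partial>lborel)
    = (\<integral>\<^sup>+x. ennreal (1 / (2*pi)) * \<integral>\<^sup>+y. ennreal (exp (- (x\<^sup>2 + y\<^sup>2) / 2))
      * indicator {-(c*\<bar>x\<bar>)..c*\<bar>x\<bar>} y \<partial>lborel \<partial>lborel)"
    by (simp add: mult.assoc nn_integral_cmult)
  also have "\<dots> = ennreal (1 / (2*pi)) * (\<integral>\<^sup>+x. \<integral>\<^sup>+y. ennreal (exp (- (x\<^sup>2 + y\<^sup>2) / 2))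
      * indicator {-(c*\<bar>x\<bar>)..c*\<bar>x\<bar>} y \<partial>lborel \<partial>lborel)"
    by (rule nn_integral_cmult) measurable
  also have "\<dots> = ennreal (1 / (2*pi)) * ennreal (4 * arctan c)"
    by (subst nn_integral_gauss_double_cone[OF c]) (rule refl)
  also have "\<dots> = ennreal ((2/pi) * arctan c)"
    using c by (simp add: ennreal_mult[symmetric] field_simps)
  finally show ?thesis .
qed

lemma (in prob_space) prob_abs_le_mult_abs_std_normal:
  fixes X Y :: "'a \<Rightarrow> real" and c :: real
  assumes ind: "indep_var lborel X lborel Y"
    and DX: "distributed M lborel X std_normal_density"
    and DY: "distributed M lborel Y std_normal_density"
    and c: "c \<ge> 0"
  shows "emeasure M {\<omega>\<in>space M. \<bar>Y \<omega>\<bar> \<le> c * \<bar>X \<omega>\<bar>} = ennreal ((2/pi) * arctan c)"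
proof -
  let ?f = "\<lambda>(x, y). ennreal (std_normal_density x) * ennreal (std_normal_density y)"
  let ?A = "{z::real\<times>real. \<bar>snd z\<bar> \<le> c * \<bar>fst z\<bar>}"
  have sf: "sigma_finite_measure lborel" ..
  have J: "distributed M (lborel \<Otimes>\<^sub>M lborel) (\<lambda>\<omega>. (X \<omega>, Y \<omega>)) ?f"
    by (rule distributed_joint_indep[OF sf sf DX DY ind])
  have "?A = {z\<in>space (lborel \<Otimes>\<^sub>M lborel). \<bar>snd z\<bar> \<le> c * \<bar>fst z\<bar>}"
    by (simp add: space_pair_measure)
  also have "\<dots> \<in> sets (lborel \<Otimes>\<^sub>M lborel)" by measurable
  finally have A: "?A \<in> sets (lborel \<Otimes>\<^sub>M lborel)" .
  have "{\<omega>\<in>space M. \<bar>Y \<omega>\<bar> \<le> c * \<bar>X \<omega>\<bar>} = (\<lambda>\<omega>. (X \<omega>, Y \<omega>)) -` ?A \<inter> space M" by auto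
  then have "emeasure M {\<omega>\<in>space M. \<bar>Y \<omega>\<bar> \<le> c * \<bar>X \<omega>\<bar>}
      = (\<integral>\<^sup>+z. ?f z * indicator ?A z \<partial>(lborel \<Otimes>\<^sub>M lborel))"
    using distributed_emeasure[OF J A] by simp
  also have "\<dots> = (\<integral>\<^sup>+x. \<integral>\<^sup>+y. ?f (x, y) * indicator ?A (x, y) \<partial>lborel \<partial>lborel)"
    by (rule lborel.nn_integral_fst[symmetric]) measurable
  also have "\<dots> = (\<integral>\<^sup>+x. \<integral>\<^sup>+y. ennreal (std_normal_density x) * ennreal (std_normal_density y)
      * indicator {-(c*\<bar>x\<bar>)..c*\<bar>x\<bar>} y \<partial>lborel \<partial>lborel)"
    by (intro nn_integral_cong) (auto simp: indicator_def abs_le_iff)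
  also have "\<dots> = ennreal ((2/pi) * arctan c)" by (rule nn_integral_std_normal_double_cone[OF c])
  finally show ?thesis .
qed

lemma (in prob_space) prob_abs_le_abs_normal:
  fixes U V :: "'a \<Rightarrow> real"
  assumes ind: "indep_var lborel U lborel V"
    and DU: "distributed M lborel U (normal_density 0 a)"
    and DV: "distributed M lborel V (normal_density 0 b)"
    and a: "a > 0" and b: "b > 0"
  shows "emeasure M {\<omega>\<in>space M. \<bar>V \<omega>\<bar> \<le> \<bar>U \<omega>\<bar>} = ennreal ((2/pi) * arctan (a/b))"
proof -
  have DX: "distributed M lborel (\<lambda>\<omega>. (U \<omega> - 0) / a) std_normal_density"
    using DU normal_standard_normal_convert[OF a] by simp
  have DY: "distributed M lborel (\<lambda>\<omega>. (V \<omega> - 0) / b) std_normal_density"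
    using DV normal_standard_normal_convert[OF b] by simp
  have ind': "indep_var lborel ((\<lambda>u. (u - 0) / a) \<circ> U) lborel ((\<lambda>u. (u - 0) / b) \<circ> V)"
    by (rule indep_var_compose[OF ind]) auto
  have "emeasure M {\<omega>\<in>space M. \<bar>(V \<omega> - 0) / b\<bar> \<le> (a / b) * \<bar>(U \<omega> - 0) / a\<bar>} = ennreal ((2/pi) * arctan (a/b))"
    by (rule prob_abs_le_mult_abs_std_normal[OF ind'[unfolded comp_def] DX DY]) (use a b in simp)
  moreover have "{\<omega>\<in>space M. \<bar>(V \<omega> - 0) / b\<bar> \<le> (a / b) * \<bar>(U \<omega> - 0) / a\<bar>} = {\<omega>\<in>space M. \<bar>V \<omega>\<bar> \<le> \<bar>U \<omega>\<bar>}"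
    using a b by (auto simp: abs_divide divide_le_cancel)
  ultimately show ?thesis by simp
qed

lemma (in prob_space) prob_normal_eq_zero:
  fixes V :: "'a \<Rightarrow> real"
  assumes DV: "distributed M lborel V (normal_density 0 b)"
  shows "emeasure M {\<omega>\<in>space M. V \<omega> = 0} = 0"
proof -
  have "{\<omega>\<in>space M. V \<omega> = 0} = V -` {0} \<inter> space M" by auto
  then have "emeasure M {\<omega>\<in>space M. V \<omega> = 0} = (\<integral>\<^sup>+x. ennreal (normal_density 0 b x) * indicator {0} x \<partial>lborel)"
    using distributed_emeasure[OF DV, of "{0}"] by simp
  also have "\<dots> = (\<integral>\<^sup>+(x::real). 0 \<partial>lborel)"
    by (rule nn_integral_cong_AE, rule AE_I[where N="{0}"]) (auto split: split_indicator)
  finally show ?thesis by simp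
qed

section \<open>Independent blocks of a product measure\<close>

lemma indep_vars_PiM_components:
  assumes P: "prob_space N" and T: "T \<noteq> {}"
  shows "prob_space.indep_vars (PiM T (\<lambda>_. N)) (\<lambda>_. N) (\<lambda>t \<omega>. \<omega> t) T"
proof -
  interpret G: prob_space "PiM T (\<lambda>_. N)" by (intro prob_space_PiM P)
  have "distr (PiM T (\<lambda>_. N)) (PiM T (\<lambda>_. N)) (\<lambda>\<omega>. \<lambda>t\<in>T. \<omega> t) = distr (PiM T (\<lambda>_. N)) (PiM T (\<lambda>_. N)) (\<lambda>\<omega>. \<omega>)"
    by (intro distr_cong) (auto simp: space_PiM PiE_def extensional_restrict)
  also have "\<dots> = PiM T (\<lambda>_. N)" by (rule distr_id)
  also have "\<dots> = PiM T (\<lambda>t. distr (PiM T (\<lambda>_. N)) N (\<lambda>\<omega>. \<omega> t))"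
    by (intro PiM_cong refl distr_PiM_component[symmetric] P) 
  finally show ?thesis
    by (subst G.indep_vars_iff_distr_eq_PiM'[OF T]) auto
qed

lemma indep_vars_PiM_blocks:
  assumes P: "prob_space N" and T: "T \<noteq> {}"
    and K: "\<And>l. l \<in> L \<Longrightarrow> K l \<subseteq> T" and dj: "disjoint_family_on K L"
    and g: "\<And>l. l \<in> L \<Longrightarrow> g l \<in> measurable (PiM (K l) (\<lambda>_. N)) (Mo l)"
  shows "prob_space.indep_vars (PiM T (\<lambda>_. N)) Mo (\<lambda>l \<omega>. g l (restrict \<omega> (K l))) L"
proof -
  interpret G: prob_space "PiM T (\<lambda>_. N)" by (intro prob_space_PiM P)
  have "G.indep_vars (\<lambda>l. PiM (K l) (\<lambda>_. N)) (\<lambda>l \<omega>. restrict (\<lambda>t. \<omega> t) (K l)) L"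
    by (rule G.indep_vars_restrict[OF indep_vars_PiM_components[OF P T] K dj])
  from G.indep_vars_compose2[OF this g] show ?thesis by simp
qed

lemma indep_var_PiM_blocks:
  assumes P: "prob_space N" and T: "T \<noteq> {}"
    and AB: "A \<inter> B = {}" "A \<subseteq> T" "B \<subseteq> T"
    and f: "f \<in> measurable (PiM A (\<lambda>_. N)) Mf" and g: "g \<in> measurable (PiM B (\<lambda>_. N)) Mg"
  shows "prob_space.indep_var (PiM T (\<lambda>_. N)) Mf (\<lambda>\<omega>. f (restrict \<omega> A)) Mg (\<lambda>\<omega>. g (restrict \<omega> B))"
proof -
  interpret G: prob_space "PiM T (\<lambda>_. N)" by (intro prob_space_PiM P)
  have "G.indep_var (PiM A (\<lambda>_. N)) (\<lambda>\<omega>. restrict (\<lambda>t. \<omega> t) A) (PiM B (\<lambda>_. N)) (\<lambda>\<omega>. restrict (\<lambda>t. \<omega> t) B)"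
    by (rule G.indep_var_restrict[OF indep_vars_PiM_components[OF P T] AB])
  from G.indep_var_compose[OF this f g] show ?thesis by (simp add: comp_def)
qed

section \<open>The channel as a family of independent real parts\<close>

definition cn_part :: "real measure" where
  "cn_part = density lborel (\<lambda>x. ennreal (normal_density 0 (sqrt (1/2)) x))"

lemma prob_space_cn_part: "prob_space cn_part"
  unfolding cn_part_def by (rule prob_space_normal_density) simp

lemma sets_cn_part[measurable_cong, simp]: "sets cn_part = sets borel"
  by (simp add: cn_part_def)

lemma measurable_component_cn_part:
  "t \<in> K \<Longrightarrow> (\<lambda>f. f t) \<in> borel_measurable (PiM K (\<lambda>_. cn_part))"
  using measurable_component_singleton[of t K "\<lambda>_. cn_part"]
    measurable_cong_sets[OF refl sets_cn_part, of "PiM K (\<lambda>_. cn_part)"]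
  by simp

lemma distributed_component_cn_part:
  assumes "t \<in> T"
  shows "distributed (PiM T (\<lambda>_. cn_part)) lborel (\<lambda>\<omega>. \<omega> t) (normal_density 0 (sqrt (1/2)))"
proof -
  have "distr (PiM T (\<lambda>_. cn_part)) lborel (\<lambda>\<omega>. \<omega> t) = distr (PiM T (\<lambda>_. cn_part)) cn_part (\<lambda>\<omega>. \<omega> t)"
    by (rule distr_cong) auto
  also have "\<dots> = cn_part"
    by (rule distr_PiM_component) (use assms prob_space_cn_part in auto)
  finally show ?thesis
    unfolding distributed_def using measurable_component_cn_part[OF assms] by (simp add: cn_part_def)
qed

lemma measurable_Complex_pair[measurable]:
  "(\<lambda>(a, b). Complex a b) \<in> borel_measurable (borel \<Otimes>\<^sub>M borel)"
  unfolding Complex_eq[abs_def] by measurable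

lemma distr_PiM_Complex_eq_CN01:
  assumes T: "T \<noteq> {}" and t: "t0 \<in> T" "t1 \<in> T" "t0 \<noteq> t1"
  shows "distr (PiM T (\<lambda>_. cn_part)) borel (\<lambda>\<omega>. Complex (\<omega> t0) (\<omega> t1)) = CN01"
proof -
  interpret G: prob_space "PiM T (\<lambda>_. cn_part)" by (intro prob_space_PiM prob_space_cn_part)
  have "G.indep_var cn_part (\<lambda>\<omega>. (\<lambda>f. f t0) (restrict \<omega> {t0})) cn_part (\<lambda>\<omega>. (\<lambda>f. f t1) (restrict \<omega> {t1}))"
    by (rule indep_var_PiM_blocks[OF prob_space_cn_part T]) (use t in auto)
  then have ind: "G.indep_var cn_part (\<lambda>\<omega>. \<omega> t0) cn_part (\<lambda>\<omega>. \<omega> t1)" by simp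
  have "distr (PiM T (\<lambda>_. cn_part)) cn_part (\<lambda>\<omega>. \<omega> t) = cn_part" if "t \<in> T" for t
    by (rule distr_PiM_component) (use that prob_space_cn_part in auto)
  then have pair: "cn_part \<Otimes>\<^sub>M cn_part = distr (PiM T (\<lambda>_. cn_part)) (cn_part \<Otimes>\<^sub>M cn_part) (\<lambda>\<omega>. (\<omega> t0, \<omega> t1))"
    using ind t unfolding G.indep_var_distribution_eq by simp
  have "CN01 = distr (cn_part \<Otimes>\<^sub>M cn_part) borel (\<lambda>(a, b). Complex a b)"
    unfolding CN01_def cn_part_def by simp
  also have "\<dots> = distr (PiM T (\<lambda>_. cn_part)) borel ((\<lambda>(a, b). Complex a b) \<circ> (\<lambda>\<omega>. (\<omega> t0, \<omega> t1)))"
    by (subst pair, rule distr_distr) (use t in auto)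
  finally show ?thesis by (simp add: comp_def)
qed

text \<open>The channel is generated from its real and imaginary parts:
  \<open>\<omega> (i, j, False) = Re H(i, j)\<close> and \<open>\<omega> (i, j, True) = Im H(i, j)\<close>.\<close>

definition parts_index :: "nat \<Rightarrow> nat \<Rightarrow> (nat \<times> nat \<times> bool) set" where
  "parts_index Nr Nt = {..<Nr} \<times> {..<Nt} \<times> UNIV"

definition parts_measure :: "nat \<Rightarrow> nat \<Rightarrow> (nat \<times> nat \<times> bool \<Rightarrow> real) measure" where
  "parts_measure Nr Nt = PiM (parts_index Nr Nt) (\<lambda>_. cn_part)"

definition channel_of_parts :: "nat \<Rightarrow> nat \<Rightarrow> (nat \<times> nat \<times> bool \<Rightarrow> real) \<Rightarrow> nat \<times> nat \<Rightarrow> complex" where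
  "channel_of_parts Nr Nt \<omega> =
     (\<lambda>k\<in>{..<Nr} \<times> {..<Nt}. Complex (\<omega> (fst k, snd k, False)) (\<omega> (fst k, snd k, True)))"

lemma prob_space_parts_measure: "prob_space (parts_measure Nr Nt)"
  unfolding parts_measure_def by (intro prob_space_PiM prob_space_cn_part)

lemma parts_index_nonempty: "Nr \<ge> 1 \<Longrightarrow> Nt \<ge> 1 \<Longrightarrow> parts_index Nr Nt \<noteq> {}"
  by (auto simp: parts_index_def lessThan_empty_iff)

lemma measurable_channel_of_parts:
  "channel_of_parts Nr Nt \<in> measurable (parts_measure Nr Nt) (PiM ({..<Nr} \<times> {..<Nt}) (\<lambda>_. borel))"
  unfolding channel_of_parts_def
proof (rule measurable_restrict)
  fix k assume k: "k \<in> {..<Nr} \<times> {..<Nt}"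
  have "(\<lambda>\<omega>. (\<omega> (fst k, snd k, False), \<omega> (fst k, snd k, True))) \<in> measurable (parts_measure Nr Nt) (borel \<Otimes>\<^sub>M borel)"
    unfolding parts_measure_def
    by (intro measurable_Pair measurable_component_cn_part) (use k in \<open>auto simp: parts_index_def\<close>)
  from measurable_comp[OF this measurable_Complex_pair]
  show "(\<lambda>\<omega>. Complex (\<omega> (fst k, snd k, False)) (\<omega> (fst k, snd k, True))) \<in> borel_measurable (parts_measure Nr Nt)"
    by (simp add: comp_def)
qed

lemma chan_measure_eq_distr_parts:
  assumes "Nr \<ge> 1" "Nt \<ge> 1"
  shows "chan_measure Nr Nt =
    distr (parts_measure Nr Nt) (PiM ({..<Nr} \<times> {..<Nt}) (\<lambda>_. borel)) (channel_of_parts Nr Nt)"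
proof -
  let ?L = "{..<Nr} \<times> {..<Nt}"
  let ?K = "\<lambda>k::nat\<times>nat. {(fst k, snd k, False), (fst k, snd k, True)}"
  let ?g = "\<lambda>k::nat\<times>nat. \<lambda>f. Complex (f (fst k, snd k, False)) (f (fst k, snd k, True))"
  interpret G: prob_space "parts_measure Nr Nt" by (rule prob_space_parts_measure)
  have T: "parts_index Nr Nt \<noteq> {}" using parts_index_nonempty assms .
  have "G.indep_vars (\<lambda>_. borel) (\<lambda>l \<omega>. ?g l (restrict \<omega> (?K l))) ?L"
    unfolding parts_measure_def
  proof (rule indep_vars_PiM_blocks[OF prob_space_cn_part T])
    show "\<And>l. l \<in> ?L \<Longrightarrow> ?K l \<subseteq> parts_index Nr Nt" by (auto simp: parts_index_def)
    show "disjoint_family_on ?K ?L" by (auto simp: disjoint_family_on_def)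
    show "?g l \<in> borel_measurable (PiM (?K l) (\<lambda>_. cn_part))" for l
    proof -
      have "(\<lambda>f. (f (fst l, snd l, False), f (fst l, snd l, True))) \<in> measurable (PiM (?K l) (\<lambda>_. cn_part)) (borel \<Otimes>\<^sub>M borel)"
        by (intro measurable_Pair) (auto intro!: measurable_component_cn_part)
      from measurable_comp[OF this measurable_Complex_pair] show ?thesis by (simp add: comp_def)
    qed
  qed
  then have ind: "G.indep_vars (\<lambda>_. borel) ?g ?L"
    by (rule G.indep_vars_cong[THEN iffD1, rotated -1]) auto
  have "G.random_variable borel (?g l)" if "l \<in> ?L" for l
    using ind that unfolding G.indep_vars_def by (cases l) simp
  then have "distr (parts_measure Nr Nt) (PiM ?L (\<lambda>_. borel)) (\<lambda>\<omega>. \<lambda>l\<in>?L. ?g l \<omega>)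
      = PiM ?L (\<lambda>l. distr (parts_measure Nr Nt) borel (?g l))"
    using G.indep_vars_iff_distr_eq_PiM'[where I="?L" and M'="\<lambda>_. borel" and X="?g"] ind T
    by (auto simp: parts_index_def)
  also have "\<dots> = PiM ?L (\<lambda>_. CN01)"
    unfolding parts_measure_def
    by (intro PiM_cong refl distr_PiM_Complex_eq_CN01[OF T]) (auto simp: parts_index_def)
  finally show ?thesis unfolding chan_measure_def channel_of_parts_def by simp
qed

section \<open>Sign collisions of a single real row\<close>

definition hamming_dist :: "nat \<Rightarrow> (nat \<Rightarrow> real) \<Rightarrow> (nat \<Rightarrow> real) \<Rightarrow> nat" where
  "hamming_dist Nt x m = card {j. j < Nt \<and> x j \<noteq> m j}"

definition collision_prob :: "nat \<Rightarrow> nat \<Rightarrow> real" where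
  "collision_prob Nt d = (2 / pi) * arctan (sqrt ((real Nt - real d) / real d))"

definition row_sign_collision ::
    "nat \<Rightarrow> (nat \<Rightarrow> real) \<Rightarrow> (nat \<Rightarrow> real) \<Rightarrow> nat \<Rightarrow> bool \<Rightarrow> (nat \<times> nat \<times> bool \<Rightarrow> real) \<Rightarrow> bool" where
  "row_sign_collision Nt x m i b \<omega> \<longleftrightarrow>
     rsign (\<Sum>j<Nt. \<omega> (i, j, b) * x j) = rsign (\<Sum>j<Nt. \<omega> (i, j, b) * m j)"

lemma hamming_dist_le: "hamming_dist Nt x m \<le> Nt"
proof -
  have "card {j. j < Nt \<and> x j \<noteq> m j} \<le> card {..<Nt}" by (rule card_mono) auto
  then show ?thesis by (simp add: hamming_dist_def)
qed

lemma collision_prob_nonneg: "d \<le> Nt \<Longrightarrow> 0 \<le> collision_prob Nt d"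
  by (simp add: collision_prob_def)

lemma bpsk_set_eq_iff:
  assumes "x \<in> bpsk_set Nt" "m \<in> bpsk_set Nt"
  shows "x = m \<longleftrightarrow> (\<forall>j<Nt. x j = m j)"
proof
  assume "\<forall>j<Nt. x j = m j"
  then show "x = m" using assms by (auto simp: bpsk_set_def fun_eq_iff) (metis not_le)
qed simp

lemma bpsk_set_disagree_neg:
  assumes "x \<in> bpsk_set Nt" "m \<in> bpsk_set Nt" "j < Nt" "x j \<noteq> m j"
  shows "m j = - x j"
  using assms by (force simp: bpsk_set_def)

lemma rsign_add_eq_rsign_diff_imp_abs_le: "rsign (u + v) = rsign (u - v) \<Longrightarrow> \<bar>v\<bar> \<le> \<bar>u\<bar>"
  for u v :: real
  by (auto simp: rsign_def split: if_splits)

lemma borel_measurable_row_sum: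
  assumes "i < Nr" "S \<subseteq> {..<Nt}"
  shows "(\<lambda>\<omega>. \<Sum>j\<in>S. \<omega> (i, j, b) * x j) \<in> borel_measurable (parts_measure Nr Nt)"
  unfolding parts_measure_def
  by (intro borel_measurable_sum borel_measurable_times measurable_component_cn_part)
     (use assms in \<open>auto simp: parts_index_def\<close>)

lemma distributed_signed_row_sum:
  assumes Nr: "Nr \<ge> 1" and Nt: "Nt \<ge> 1" and i: "i < Nr"
    and S: "S \<subseteq> {..<Nt}" "S \<noteq> {}"
    and x: "\<And>j. j \<in> S \<Longrightarrow> x j = 1 \<or> x j = -1"
  shows "distributed (parts_measure Nr Nt) lborel (\<lambda>\<omega>. \<Sum>j\<in>S. \<omega> (i, j, b) * x j)
           (normal_density 0 (sqrt (real (card S) / 2)))"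
proof -
  interpret G: prob_space "parts_measure Nr Nt" by (rule prob_space_parts_measure)
  have "G.indep_vars (\<lambda>_. borel) (\<lambda>j \<omega>. (\<lambda>f. f (i, j, b) * x j) (restrict \<omega> {(i, j, b)})) S"
    unfolding parts_measure_def
  proof (rule indep_vars_PiM_blocks[OF prob_space_cn_part parts_index_nonempty[OF Nr Nt]])
    show "\<And>l. l \<in> S \<Longrightarrow> {(i, l, b)} \<subseteq> parts_index Nr Nt" using S i by (auto simp: parts_index_def)
    show "disjoint_family_on (\<lambda>j. {(i, j, b)}) S" by (auto simp: disjoint_family_on_def)
    show "(\<lambda>f. f (i, l, b) * x l) \<in> borel_measurable (PiM {(i, l, b)} (\<lambda>_. cn_part))" for l
      by (intro borel_measurable_times measurable_component_cn_part) auto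
  qed
  then have ind: "G.indep_vars (\<lambda>_. borel) (\<lambda>j \<omega>. \<omega> (i, j, b) * x j) S" by simp
  have D: "distributed (parts_measure Nr Nt) lborel (\<lambda>\<omega>. \<omega> (i, j, b) * x j) (normal_density 0 (sqrt (1/2)))"
    if j: "j \<in> S" for j
  proof -
    have c: "distributed (parts_measure Nr Nt) lborel (\<lambda>\<omega>. \<omega> (i, j, b)) (normal_density 0 (sqrt (1/2)))"
      unfolding parts_measure_def
      by (rule distributed_component_cn_part) (use S i j in \<open>auto simp: parts_index_def\<close>)
    have "x j \<noteq> 0" "\<bar>x j\<bar> = 1" using x[OF j] by auto
    from G.normal_density_affine[OF c _ this(1), of 0] this(2)
    show ?thesis by (simp add: mult.commute)
  qed
  have "finite S" using S finite_subset by blast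
  have "distributed (parts_measure Nr Nt) lborel (\<lambda>\<omega>. \<Sum>j\<in>S. \<omega> (i, j, b) * x j)
      (normal_density (\<Sum>j\<in>S. 0) (sqrt (\<Sum>j\<in>S. (sqrt (1/2))\<^sup>2)))"
    by (rule G.sum_indep_normal[OF \<open>finite S\<close> S(2) ind]) (auto intro: D)
  then show ?thesis by simp
qed

lemma indep_var_disjoint_row_sums:
  assumes Nr: "Nr \<ge> 1" and Nt: "Nt \<ge> 1" and i: "i < Nr"
    and SD: "S \<inter> D = {}" "S \<subseteq> {..<Nt}" "D \<subseteq> {..<Nt}"
  shows "prob_space.indep_var (parts_measure Nr Nt)
    lborel (\<lambda>\<omega>. \<Sum>j\<in>S. \<omega> (i, j, b) * x j) lborel (\<lambda>\<omega>. \<Sum>j\<in>D. \<omega> (i, j, b) * x j)"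
proof -
  let ?A = "(\<lambda>j. (i, j, b)) ` S" and ?B = "(\<lambda>j. (i, j, b)) ` D"
  have "prob_space.indep_var (parts_measure Nr Nt)
      lborel (\<lambda>\<omega>. (\<lambda>f. \<Sum>j\<in>S. f (i, j, b) * x j) (restrict \<omega> ?A))
      lborel (\<lambda>\<omega>. (\<lambda>f. \<Sum>j\<in>D. f (i, j, b) * x j) (restrict \<omega> ?B))"
    unfolding parts_measure_def
  proof (rule indep_var_PiM_blocks[OF prob_space_cn_part parts_index_nonempty[OF Nr Nt]])
    show "?A \<inter> ?B = {}" using SD(1) by auto
    show "?A \<subseteq> parts_index Nr Nt" "?B \<subseteq> parts_index Nr Nt" using SD i by (auto simp: parts_index_def)
    show "(\<lambda>f. \<Sum>j\<in>S. f (i, j, b) * x j) \<in> measurable (PiM ?A (\<lambda>_. cn_part)) lborel"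
      by (simp only: measurable_lborel1)
         (intro borel_measurable_sum borel_measurable_times measurable_component_cn_part, auto)
    show "(\<lambda>f. \<Sum>j\<in>D. f (i, j, b) * x j) \<in> measurable (PiM ?B (\<lambda>_. cn_part)) lborel"
      by (simp only: measurable_lborel1)
         (intro borel_measurable_sum borel_measurable_times measurable_component_cn_part, auto)
  qed
  moreover have "(\<lambda>\<omega>. (\<lambda>f. \<Sum>j\<in>E. f (i, j, b) * x j) (restrict \<omega> ((\<lambda>j. (i, j, b)) ` E)))
      = (\<lambda>\<omega>. \<Sum>j\<in>E. \<omega> (i, j, b) * x j)" for E
    by (intro ext sum.cong) auto
  ultimately show ?thesis by simp
qed

lemma prob_abs_row_sum_le:
  assumes Nr: "Nr \<ge> 1" and Nt: "Nt \<ge> 1" and i: "i < Nr"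
    and SD: "S \<inter> D = {}" "S \<union> D = {..<Nt}" "D \<noteq> {}"
    and x: "\<And>j. j < Nt \<Longrightarrow> x j = 1 \<or> x j = -1"
  shows "emeasure (parts_measure Nr Nt) {\<omega>\<in>space (parts_measure Nr Nt).
      \<bar>\<Sum>j\<in>D. \<omega> (i, j, b) * x j\<bar> \<le> \<bar>\<Sum>j\<in>S. \<omega> (i, j, b) * x j\<bar>} \<le> ennreal (collision_prob Nt (card D))"
proof -
  let ?P = "parts_measure Nr Nt"
  interpret G: prob_space ?P by (rule prob_space_parts_measure)
  define U where "U = (\<lambda>\<omega>::nat\<times>nat\<times>bool\<Rightarrow>real. \<Sum>j\<in>S. \<omega> (i, j, b) * x j)"
  define V where "V = (\<lambda>\<omega>::nat\<times>nat\<times>bool\<Rightarrow>real. \<Sum>j\<in>D. \<omega> (i, j, b) * x j)"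
  have sub: "S \<subseteq> {..<Nt}" "D \<subseteq> {..<Nt}" and fin: "finite S" "finite D"
    using SD(2) by (auto intro: finite_subset[of _ "{..<Nt}"])
  have x_S: "x j = 1 \<or> x j = -1" if "j \<in> S" for j
    using x that sub(1) by blast
  have x_D: "x j = 1 \<or> x j = -1" if "j \<in> D" for j
    using x that sub(2) by blast
  have DV: "distributed ?P lborel V (normal_density 0 (sqrt (real (card D) / 2)))"
    unfolding V_def by (rule distributed_signed_row_sum[OF Nr Nt i sub(2) SD(3) x_D])
  have "emeasure ?P {\<omega>\<in>space ?P. \<bar>V \<omega>\<bar> \<le> \<bar>U \<omega>\<bar>} \<le> ennreal (collision_prob Nt (card D))"
  proof (cases "S = {}")
    case True
    then have "{\<omega>\<in>space ?P. \<bar>V \<omega>\<bar> \<le> \<bar>U \<omega>\<bar>} = {\<omega>\<in>space ?P. V \<omega> = 0}" by (simp add: U_def)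
    then show ?thesis using G.prob_normal_eq_zero[OF DV] by simp
  next
    case False
    have DU: "distributed ?P lborel U (normal_density 0 (sqrt (real (card S) / 2)))"
      unfolding U_def by (rule distributed_signed_row_sum[OF Nr Nt i sub(1) False x_S])
    have ind: "G.indep_var lborel U lborel V"
      unfolding U_def V_def using indep_var_disjoint_row_sums[OF Nr Nt i SD(1) sub] .
    have "card S + card D = Nt"
      using card_Un_disjoint[OF fin SD(1)] SD(2) by simp
    moreover have "card D > 0" "card S > 0" using False SD(3) fin by auto
    ultimately have "sqrt (real (card S) / 2) / sqrt (real (card D) / 2)
        = sqrt ((real Nt - real (card D)) / real (card D))"
      by (simp add: real_sqrt_divide[symmetric] field_simps of_nat_diff)
    moreover have "emeasure ?P {\<omega>\<in>space ?P. \<bar>V \<omega>\<bar> \<le> \<bar>U \<omega>\<bar>}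
        = ennreal ((2/pi) * arctan (sqrt (real (card S) / 2) / sqrt (real (card D) / 2)))"
      using \<open>card D > 0\<close> \<open>card S > 0\<close> by (intro G.prob_abs_le_abs_normal[OF ind DU DV]) auto
    ultimately show ?thesis by (simp add: collision_prob_def)
  qed
  then show ?thesis by (simp only: U_def V_def)
qed

lemma prob_row_sign_collision_le:
  assumes Nr: "Nr \<ge> 1" and Nt: "Nt \<ge> 1" and i: "i < Nr"
    and x: "x \<in> bpsk_set Nt" and m: "m \<in> bpsk_set Nt" and xm: "x \<noteq> m"
  shows "emeasure (parts_measure Nr Nt) {\<omega>\<in>space (parts_measure Nr Nt). row_sign_collision Nt x m i b \<omega>}
    \<le> ennreal (collision_prob Nt (hamming_dist Nt x m))"
proof -
  let ?P = "parts_measure Nr Nt"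
  define S where "S = {j. j < Nt \<and> x j = m j}"
  define D where "D = {j. j < Nt \<and> x j \<noteq> m j}"
  define U where "U = (\<lambda>\<omega>::nat\<times>nat\<times>bool\<Rightarrow>real. \<Sum>j\<in>S. \<omega> (i, j, b) * x j)"
  define V where "V = (\<lambda>\<omega>::nat\<times>nat\<times>bool\<Rightarrow>real. \<Sum>j\<in>D. \<omega> (i, j, b) * x j)"
  have SD: "S \<inter> D = {}" "S \<union> D = {..<Nt}" by (auto simp: S_def D_def)
  have fin: "finite S" "finite D" by (simp_all add: S_def D_def)
  have "(\<Sum>j<Nt. \<omega> (i, j, b) * x j) = U \<omega> + V \<omega>" for \<omega>
    unfolding U_def V_def SD(2)[symmetric] by (rule sum.union_disjoint[OF fin SD(1)])
  moreover have "(\<Sum>j<Nt. \<omega> (i, j, b) * m j) = U \<omega> - V \<omega>" for \<omega>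
  proof -
    have "m j = - x j" if "j \<in> D" for j
      using that bpsk_set_disagree_neg[OF x m] by (simp add: D_def)
    then have "(\<Sum>j\<in>D. \<omega> (i, j, b) * m j) = - V \<omega>" by (simp add: V_def sum_negf[symmetric])
    moreover have "(\<Sum>j\<in>S. \<omega> (i, j, b) * m j) = U \<omega>" unfolding U_def by (intro sum.cong) (auto simp: S_def)
    ultimately show ?thesis unfolding SD(2)[symmetric] sum.union_disjoint[OF fin SD(1)] by simp
  qed
  ultimately have collision_imp:
      "{\<omega>\<in>space ?P. row_sign_collision Nt x m i b \<omega>} \<subseteq> {\<omega>\<in>space ?P. \<bar>V \<omega>\<bar> \<le> \<bar>U \<omega>\<bar>}"
    by (auto simp: row_sign_collision_def intro: rsign_add_eq_rsign_diff_imp_abs_le)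
  have [measurable]: "U \<in> borel_measurable ?P" "V \<in> borel_measurable ?P"
    unfolding U_def V_def using i by (auto intro: borel_measurable_row_sum simp: S_def D_def)
  from collision_imp have "emeasure ?P {\<omega>\<in>space ?P. row_sign_collision Nt x m i b \<omega>}
      \<le> emeasure ?P {\<omega>\<in>space ?P. \<bar>V \<omega>\<bar> \<le> \<bar>U \<omega>\<bar>}"
    by (rule emeasure_mono) measurable
  also have "\<dots> \<le> ennreal (collision_prob Nt (card D))"
    unfolding U_def V_def
  proof (rule prob_abs_row_sum_le[OF Nr Nt i SD])
    show "D \<noteq> {}" using xm bpsk_set_eq_iff[OF x m] by (auto simp: D_def)
  qed (use x in \<open>auto simp: bpsk_set_def\<close>)
  finally show ?thesis by (simp add: hamming_dist_def D_def)
qed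

section \<open>Sign collisions of the whole channel\<close>

definition confusion_event :: "nat \<Rightarrow> nat \<Rightarrow> (nat \<Rightarrow> real) \<Rightarrow> (nat \<Rightarrow> real) \<Rightarrow> (nat \<times> nat \<Rightarrow> complex) set" where
  "confusion_event Nr Nt x m =
     {H \<in> space (chan_measure Nr Nt). \<forall>i<Nr. onebit_out Nr Nt H x i = onebit_out Nr Nt H m i}"

lemma onebit_out_eq_iff:
  "onebit_out Nr Nt H x i = onebit_out Nr Nt H m i \<longleftrightarrow>
    rsign (\<Sum>j<Nt. Re (H (i, j)) * x j) = rsign (\<Sum>j<Nt. Re (H (i, j)) * m j) \<and>
    rsign (\<Sum>j<Nt. Im (H (i, j)) * x j) = rsign (\<Sum>j<Nt. Im (H (i, j)) * m j)"
  by (simp add: onebit_out_def csign_def complex_eq_iff)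

lemma rsign_eq_iff: "rsign a = rsign b \<longleftrightarrow> (0 \<le> a \<longleftrightarrow> 0 \<le> b)"
  by (simp add: rsign_def)

lemma sets_CN01[measurable_cong, simp]: "sets CN01 = sets borel"
  by (simp add: CN01_def)

lemma measurable_component_chan_measure:
  "(i, j) \<in> {..<Nr} \<times> {..<Nt} \<Longrightarrow> (\<lambda>H. H (i, j)) \<in> borel_measurable (chan_measure Nr Nt)"
  unfolding chan_measure_def
  using measurable_component_singleton[of "(i,j)" "{..<Nr} \<times> {..<Nt}" "\<lambda>_. CN01"]
    measurable_cong_sets[OF refl sets_CN01, of "PiM ({..<Nr} \<times> {..<Nt}) (\<lambda>_. CN01)"]
  by simp

lemma confusion_event_sets:
  assumes "Nr \<ge> 1"
  shows "confusion_event Nr Nt x m \<in> sets (chan_measure Nr Nt)"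
proof -
  let ?M = "chan_measure Nr Nt"
  have "confusion_event Nr Nt x m = (\<Inter>i\<in>{..<Nr}. {H \<in> space ?M.
    rsign (\<Sum>j<Nt. Re (H (i, j)) * x j) = rsign (\<Sum>j<Nt. Re (H (i, j)) * m j) \<and>
    rsign (\<Sum>j<Nt. Im (H (i, j)) * x j) = rsign (\<Sum>j<Nt. Im (H (i, j)) * m j)})"
    using assms by (auto simp: confusion_event_def onebit_out_eq_iff) (metis Suc_le_lessD lessThan_iff)
  also have "\<dots> \<in> sets ?M"
  proof (rule sets.finite_INT)
    show "{..<Nr} \<noteq> {}" using assms by (auto simp: lessThan_empty_iff)
    fix i assume i: "i \<in> {..<Nr}"
    have H: "(\<lambda>H. H (i, j)) \<in> borel_measurable ?M" if "j < Nt" for j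
      by (rule measurable_component_chan_measure) (use i that in auto)
    have [measurable]: "(\<lambda>H. \<Sum>j<Nt. Re (H (i, j)) * y j) \<in> borel_measurable ?M"
      "(\<lambda>H. \<Sum>j<Nt. Im (H (i, j)) * y j) \<in> borel_measurable ?M" for y
      by (intro borel_measurable_sum borel_measurable_times borel_measurable_const
          measurable_compose[OF H borel_measurable_Re] measurable_compose[OF H borel_measurable_Im]; simp)+
    show "{H \<in> space ?M.
      rsign (\<Sum>j<Nt. Re (H (i, j)) * x j) = rsign (\<Sum>j<Nt. Re (H (i, j)) * m j) \<and>
      rsign (\<Sum>j<Nt. Im (H (i, j)) * x j) = rsign (\<Sum>j<Nt. Im (H (i, j)) * m j)} \<in> sets ?M"
      unfolding rsign_eq_iff by measurable
  qed simp
  finally show ?thesis .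
qed

lemma channel_of_parts_preimage_confusion_event:
  assumes "Nr \<ge> 1" "Nt \<ge> 1"
  shows "channel_of_parts Nr Nt -` confusion_event Nr Nt x m \<inter> space (parts_measure Nr Nt)
    = {\<omega>\<in>space (parts_measure Nr Nt). \<forall>i<Nr. \<forall>b. row_sign_collision Nt x m i b \<omega>}"
proof -
  have "channel_of_parts Nr Nt \<omega> \<in> space (chan_measure Nr Nt)" if "\<omega> \<in> space (parts_measure Nr Nt)" for \<omega>
    using measurable_space[OF measurable_channel_of_parts that]
    unfolding chan_measure_eq_distr_parts[OF assms] by simp
  moreover have "onebit_out Nr Nt (channel_of_parts Nr Nt \<omega>) x i = onebit_out Nr Nt (channel_of_parts Nr Nt \<omega>) m i
      \<longleftrightarrow> (\<forall>b. row_sign_collision Nt x m i b \<omega>)" if "i < Nr" for \<omega> i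
  proof -
    have "(\<Sum>j<Nt. Re (channel_of_parts Nr Nt \<omega> (i, j)) * y j) = (\<Sum>j<Nt. \<omega> (i, j, False) * y j)"
      "(\<Sum>j<Nt. Im (channel_of_parts Nr Nt \<omega> (i, j)) * y j) = (\<Sum>j<Nt. \<omega> (i, j, True) * y j)" for y
      by (intro sum.cong; use \<open>i < Nr\<close> in \<open>simp add: channel_of_parts_def\<close>)+
    then show ?thesis
      by (auto simp: onebit_out_eq_iff row_sign_collision_def all_bool_eq)
  qed
  ultimately show ?thesis by (auto simp: confusion_event_def)
qed

lemma indep_vars_row_sign_collision:
  assumes Nr: "Nr \<ge> 1" and Nt: "Nt \<ge> 1"
  shows "prob_space.indep_vars (parts_measure Nr Nt) (\<lambda>_. count_space UNIV)
    (\<lambda>l. row_sign_collision Nt x m (fst l) (snd l)) ({..<Nr} \<times> UNIV)"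
proof -
  let ?J = "{..<Nr} \<times> (UNIV :: bool set)"
  let ?K = "\<lambda>l::nat\<times>bool. (\<lambda>j. (fst l, j, snd l)) ` {..<Nt}"
  interpret G: prob_space "parts_measure Nr Nt" by (rule prob_space_parts_measure)
  have "G.indep_vars (\<lambda>_. count_space UNIV)
      (\<lambda>l \<omega>. row_sign_collision Nt x m (fst l) (snd l) (restrict \<omega> (?K l))) ?J"
    unfolding parts_measure_def
  proof (rule indep_vars_PiM_blocks[OF prob_space_cn_part parts_index_nonempty[OF Nr Nt]])
    show "\<And>l. l \<in> ?J \<Longrightarrow> ?K l \<subseteq> parts_index Nr Nt" by (auto simp: parts_index_def)
    show "disjoint_family_on ?K ?J" by (auto simp: disjoint_family_on_def)
    fix l :: "nat \<times> bool"
    have c: "(\<lambda>f. f (fst l, j, snd l)) \<in> borel_measurable (PiM (?K l) (\<lambda>_. cn_part))" if "j < Nt" for j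
      by (rule measurable_component_cn_part) (use that in auto)
    have [measurable]: "(\<lambda>f. \<Sum>j<Nt. f (fst l, j, snd l) * y j) \<in> borel_measurable (PiM (?K l) (\<lambda>_. cn_part))" for y
      by (intro borel_measurable_sum borel_measurable_times borel_measurable_const c) auto
    show "row_sign_collision Nt x m (fst l) (snd l) \<in> measurable (PiM (?K l) (\<lambda>_. cn_part)) (count_space UNIV)"
      unfolding row_sign_collision_def rsign_eq_iff by measurable
  qed
  moreover have "row_sign_collision Nt x m i b (restrict \<omega> ((\<lambda>j. (i, j, b)) ` {..<Nt}))
      = row_sign_collision Nt x m i b \<omega>" for i b \<omega>
  proof -
    have "(\<Sum>j<Nt. restrict \<omega> ((\<lambda>j. (i, j, b)) ` {..<Nt}) (i, j, b) * y j) = (\<Sum>j<Nt. \<omega> (i, j, b) * y j)" for y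
      by (intro sum.cong) auto
    then show ?thesis by (simp add: row_sign_collision_def)
  qed
  ultimately show ?thesis by simp
qed

lemma emeasure_confusion_event_le:
  assumes Nr: "Nr \<ge> 1" and Nt: "Nt \<ge> 1"
    and x: "x \<in> bpsk_set Nt" and m: "m \<in> bpsk_set Nt" and xm: "x \<noteq> m"
  shows "emeasure (chan_measure Nr Nt) (confusion_event Nr Nt x m)
    \<le> ennreal (collision_prob Nt (hamming_dist Nt x m) ^ (2 * Nr))"
proof -
  let ?P = "parts_measure Nr Nt" and ?J = "{..<Nr} \<times> (UNIV :: bool set)"
  let ?p = "collision_prob Nt (hamming_dist Nt x m)"
  let ?R = "\<lambda>l. row_sign_collision Nt x m (fst l) (snd l)"
  interpret G: prob_space ?P by (rule prob_space_parts_measure)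
  have J: "?J \<noteq> {}" "finite ?J" using Nr by (auto simp: lessThan_empty_iff)
  have "emeasure (chan_measure Nr Nt) (confusion_event Nr Nt x m)
      = emeasure ?P (channel_of_parts Nr Nt -` confusion_event Nr Nt x m \<inter> space ?P)"
  proof -
    have "confusion_event Nr Nt x m \<in> sets (PiM ({..<Nr} \<times> {..<Nt}) (\<lambda>_. borel))"
      using confusion_event_sets[OF Nr, of Nt x m] unfolding chan_measure_eq_distr_parts[OF Nr Nt] by simp
    then show ?thesis
      unfolding chan_measure_eq_distr_parts[OF Nr Nt] by (rule emeasure_distr[OF measurable_channel_of_parts])
  qed
  also have "channel_of_parts Nr Nt -` confusion_event Nr Nt x m \<inter> space ?P
      = (\<Inter>l\<in>?J. ?R l -` {True} \<inter> space ?P)"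
    unfolding channel_of_parts_preimage_confusion_event[OF Nr Nt]
  proof (rule set_eqI)
    fix \<omega>
    have "(\<forall>l\<in>?J. ?R l \<omega>) \<longleftrightarrow> (\<forall>i<Nr. \<forall>b. row_sign_collision Nt x m i b \<omega>)" by auto
    then show "\<omega> \<in> {\<omega>\<in>space ?P. \<forall>i<Nr. \<forall>b. row_sign_collision Nt x m i b \<omega>}
        \<longleftrightarrow> \<omega> \<in> (\<Inter>l\<in>?J. ?R l -` {True} \<inter> space ?P)"
      using J(1) by (simp only: mem_Collect_eq INT_iff Int_iff vimage_eq singleton_iff) blast
  qed
  also have "emeasure ?P (\<Inter>l\<in>?J. ?R l -` {True} \<inter> space ?P)
      = ennreal (\<Prod>l\<in>?J. G.prob (?R l -` {True} \<inter> space ?P))"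
    using G.indep_varsD[OF indep_vars_row_sign_collision[OF Nr Nt] J] by (simp add: G.emeasure_eq_measure)
  also have "\<dots> \<le> ennreal (?p ^ (2 * Nr))"
  proof -
    have "G.prob (?R l -` {True} \<inter> space ?P) \<le> ?p" if "l \<in> ?J" for l
    proof -
      have "?R l -` {True} \<inter> space ?P = {\<omega>\<in>space ?P. ?R l \<omega>}" by auto
      then show ?thesis
        using prob_row_sign_collision_le[OF Nr Nt _ x m xm, of "fst l" "snd l"] that
          collision_prob_nonneg[OF hamming_dist_le]
        by (auto simp: G.emeasure_eq_measure)
    qed
    then have "(\<Prod>l\<in>?J. G.prob (?R l -` {True} \<inter> space ?P)) \<le> (\<Prod>l\<in>?J. ?p)"
      by (intro prod_mono) auto
    also have "\<dots> = ?p ^ (2 * Nr)" by (simp add: card_cartesian_product mult.commute)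
    finally show ?thesis by (rule ennreal_leI)
  qed
  finally show ?thesis .
qed

section \<open>Counting and the decoder\<close>

lemma bij_betw_disagreement_set:
  assumes x: "x \<in> bpsk_set Nt"
  shows "bij_betw (\<lambda>m. {j. j < Nt \<and> x j \<noteq> m j}) (bpsk_set Nt - {x}) (Pow {..<Nt} - {{}})"
proof (rule bij_betw_byWitness[where f'="\<lambda>S j. if j \<in> S then - x j else x j"])
  have x_ne_neg: "x j \<noteq> - x j" if "j < Nt" for j
    using x that by (force simp: bpsk_set_def)
  show "\<forall>m\<in>bpsk_set Nt - {x}. (\<lambda>j. if j \<in> {j. j < Nt \<and> x j \<noteq> m j} then - x j else x j) = m"
  proof (intro ballI ext)
    fix m j assume m: "m \<in> bpsk_set Nt - {x}"
    show "(if j \<in> {j. j < Nt \<and> x j \<noteq> m j} then - x j else x j) = m j"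
      using x m bpsk_set_disagree_neg[OF x, of m j] by (cases "j < Nt") (auto simp: bpsk_set_def)
  qed
  show "\<forall>S\<in>Pow {..<Nt} - {{}}. {j. j < Nt \<and> x j \<noteq> (if j \<in> S then - x j else x j)} = S"
    using x_ne_neg by auto
  show "(\<lambda>m. {j. j < Nt \<and> x j \<noteq> m j}) ` (bpsk_set Nt - {x}) \<subseteq> Pow {..<Nt} - {{}}"
    using bpsk_set_eq_iff[OF x] by auto
  show "(\<lambda>S j. if j \<in> S then - x j else x j) ` (Pow {..<Nt} - {{}}) \<subseteq> bpsk_set Nt - {x}"
  proof (intro image_subsetI)
    fix S assume S: "S \<in> Pow {..<Nt} - {{}}"
    then obtain j where "j \<in> S" by auto
    then have "(\<lambda>j. if j \<in> S then - x j else x j) \<noteq> x"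
      using S x_ne_neg by (auto dest!: fun_cong[where x=j])
    moreover have "(\<lambda>j. if j \<in> S then - x j else x j) \<in> bpsk_set Nt"
      using x S by (auto simp: bpsk_set_def)
    ultimately show "(\<lambda>j. if j \<in> S then - x j else x j) \<in> bpsk_set Nt - {x}" by simp
  qed
qed

lemma finite_bpsk_set: "finite (bpsk_set Nt)" and bpsk_set_nonempty: "bpsk_set Nt \<noteq> {}"
proof -
  let ?x = "\<lambda>j. if j < Nt then 1 else (0::real)"
  have x: "?x \<in> bpsk_set Nt" by (simp add: bpsk_set_def)
  have "finite (bpsk_set Nt - {?x})"
    using bij_betw_finite[OF bij_betw_disagreement_set[OF x]] by simp
  then show "finite (bpsk_set Nt)" by simp
  show "bpsk_set Nt \<noteq> {}" using x by auto
qed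

lemma sum_hamming_dist_eq_binomial:
  fixes f :: "nat \<Rightarrow> real"
  assumes x: "x \<in> bpsk_set Nt"
  shows "(\<Sum>m\<in>bpsk_set Nt - {x}. f (hamming_dist Nt x m)) = (\<Sum>d=1..Nt. real (Nt choose d) * f d)"
proof -
  let ?P = "Pow {..<Nt} - {{}}"
  have "(\<Sum>m\<in>bpsk_set Nt - {x}. f (hamming_dist Nt x m)) = (\<Sum>S\<in>?P. f (card S))"
    unfolding hamming_dist_def
    by (rule sum.reindex_bij_betw[OF bij_betw_disagreement_set[OF x], of "\<lambda>S. f (card S)"])
  also have "\<dots> = (\<Sum>d\<in>{1..Nt}. \<Sum>S\<in>{S. S \<in> ?P \<and> card S = d}. f (card S))"
  proof (rule sum.group[symmetric])
    show "card ` ?P \<subseteq> {1..Nt}"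
    proof
      fix k assume "k \<in> card ` ?P"
      then obtain S where S: "S \<subseteq> {..<Nt}" "S \<noteq> {}" "k = card S" by auto
      then have "finite S" using finite_subset by blast
      then show "k \<in> {1..Nt}"
        using S card_mono[OF _ S(1)] by (simp add: Suc_le_eq card_gt_0_iff)
    qed
  qed auto
  also have "\<dots> = (\<Sum>d=1..Nt. real (Nt choose d) * f d)"
  proof (rule sum.cong[OF refl])
    fix d assume d: "d \<in> {1..Nt}"
    then have "{S. S \<in> ?P \<and> card S = d} = {S. S \<subseteq> {..<Nt} \<and> card S = d}" by auto
    then have "(\<Sum>S\<in>{S. S \<in> ?P \<and> card S = d}. f (card S)) = (\<Sum>S\<in>{S. S \<subseteq> {..<Nt} \<and> card S = d}. f d)"
      by (intro sum.cong) auto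
    also have "\<dots> = real (Nt choose d) * f d"
      using n_subsets[of "{..<Nt}" d] by simp
    finally show "(\<Sum>S\<in>{S. S \<in> ?P \<and> card S = d}. f (card S)) = real (Nt choose d) * f d" .
  qed
  finally show ?thesis .
qed

lemma vdist_eq_0_iff: "vdist Nr u v = 0 \<longleftrightarrow> (\<forall>i<Nr. u i = v i)"
proof -
  have "vdist Nr u v = 0 \<longleftrightarrow> (\<Sum>i<Nr. (cmod (u i - v i))\<^sup>2) = 0" by (simp add: vdist_def)
  also have "\<dots> \<longleftrightarrow> (\<forall>i\<in>{..<Nr}. (cmod (u i - v i))\<^sup>2 = 0)" by (rule sum_nonneg_eq_0_iff) auto
  finally show ?thesis by auto
qed

lemma minimizers_onebit_out:
  assumes x: "x \<in> bpsk_set Nt"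
  shows "minimizers Nr Nt H (onebit_out Nr Nt H x) =
    {m \<in> bpsk_set Nt. \<forall>i<Nr. onebit_out Nr Nt H x i = onebit_out Nr Nt H m i}"
proof -
  let ?d = "\<lambda>m. vdist Nr (onebit_out Nr Nt H x) (onebit_out Nr Nt H m)"
  have nonneg: "0 \<le> ?d m" for m by (simp add: vdist_def sum_nonneg)
  have "(\<forall>m'\<in>bpsk_set Nt. ?d m \<le> ?d m') \<longleftrightarrow> ?d m = 0" for m
  proof
    assume "\<forall>m'\<in>bpsk_set Nt. ?d m \<le> ?d m'"
    then have "?d m \<le> ?d x" using x by blast
    also have "?d x = 0" by (simp add: vdist_eq_0_iff)
    finally show "?d m = 0" using nonneg[of m] by linarith
  qed (simp add: nonneg)
  then show ?thesis unfolding minimizers_def by (simp add: vdist_eq_0_iff)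
qed

lemma cond_err_le_half_card_collisions:
  assumes x: "x \<in> bpsk_set Nt"
  shows "cond_err Nr Nt H x \<le>
    (1/2) * real (card {m \<in> bpsk_set Nt - {x}. \<forall>i<Nr. onebit_out Nr Nt H x i = onebit_out Nr Nt H m i})"
proof -
  let ?C = "{m \<in> bpsk_set Nt - {x}. \<forall>i<Nr. onebit_out Nr Nt H x i = onebit_out Nr Nt H m i}"
  have A: "minimizers Nr Nt H (onebit_out Nr Nt H x) = insert x ?C"
    unfolding minimizers_onebit_out[OF x] using x by auto
  have "finite ?C" using finite_bpsk_set by auto
  then have "cond_err Nr Nt H x = 1 - 1 / (1 + real (card ?C))"
    unfolding cond_err_def Let_def A by simp
  also have "\<dots> \<le> (1/2) * real (card ?C)"
    by (cases "card ?C") (simp_all add: field_simps)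
  finally show ?thesis .
qed

lemma ennreal_double_sum:
  assumes "\<And>x m. x \<in> A \<Longrightarrow> m \<in> B x \<Longrightarrow> 0 \<le> f x m"
  shows "ennreal (\<Sum>x\<in>A. \<Sum>m\<in>B x. f x m) = (\<Sum>x\<in>A. \<Sum>m\<in>B x. ennreal (f x m))"
proof -
  have "ennreal (\<Sum>x\<in>A. \<Sum>m\<in>B x. f x m) = (\<Sum>x\<in>A. ennreal (\<Sum>m\<in>B x. f x m))"
    by (rule sum_ennreal[symmetric]) (auto intro: sum_nonneg assms)
  also have "\<dots> = (\<Sum>x\<in>A. \<Sum>m\<in>B x. ennreal (f x m))"
    by (intro sum.cong refl sum_ennreal[symmetric]) (auto intro: assms)
  finally show ?thesis .
qed

lemma P_ver_inf_le_sum_confusion: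
  assumes "Nr \<ge> 1"
  shows "P_ver_inf Nr Nt \<le> (\<Sum>x\<in>bpsk_set Nt. \<Sum>m\<in>bpsk_set Nt - {x}.
    ennreal (1 / (2 * real (card (bpsk_set Nt)))) * emeasure (chan_measure Nr Nt) (confusion_event Nr Nt x m))"
proof -
  let ?B = "bpsk_set Nt" and ?M = "chan_measure Nr Nt"
  define c where "c = 1 / (2 * real (card ?B))"
  have c0: "0 \<le> c" by (simp add: c_def)
  have "ennreal ((1 / real (card ?B)) * (\<Sum>x\<in>?B. cond_err Nr Nt H x))
      \<le> (\<Sum>x\<in>?B. \<Sum>m\<in>?B - {x}. ennreal c * indicator (confusion_event Nr Nt x m) H)"
    if H: "H \<in> space ?M" for H
  proof -
    have card_collisions: "real (card {m \<in> ?B - {x}. \<forall>i<Nr. onebit_out Nr Nt H x i = onebit_out Nr Nt H m i})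
        = (\<Sum>m\<in>?B - {x}. indicator (confusion_event Nr Nt x m) H)" for x
      using H finite_bpsk_set
      by (simp add: confusion_event_def indicator_def sum.If_cases Int_def)
    have "(1 / real (card ?B)) * (\<Sum>x\<in>?B. cond_err Nr Nt H x)
        \<le> (1 / real (card ?B)) * (\<Sum>x\<in>?B. (1/2) * (\<Sum>m\<in>?B - {x}. indicator (confusion_event Nr Nt x m) H))"
      unfolding card_collisions[symmetric]
      by (intro mult_left_mono sum_mono cond_err_le_half_card_collisions) auto
    also have "\<dots> = (\<Sum>x\<in>?B. \<Sum>m\<in>?B - {x}. c * indicator (confusion_event Nr Nt x m) H)"
      by (simp add: c_def sum_distrib_left ac_simps)
    finally have "ennreal ((1 / real (card ?B)) * (\<Sum>x\<in>?B. cond_err Nr Nt H x))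
        \<le> ennreal (\<Sum>x\<in>?B. \<Sum>m\<in>?B - {x}. c * indicator (confusion_event Nr Nt x m) H)"
      by (rule ennreal_leI)
    also have "\<dots> = (\<Sum>x\<in>?B. \<Sum>m\<in>?B - {x}. ennreal c * indicator (confusion_event Nr Nt x m) H)"
      using c0 by (simp add: ennreal_double_sum ennreal_mult ennreal_indicator)
    finally show ?thesis .
  qed
  then have "P_ver_inf Nr Nt \<le> (\<integral>\<^sup>+H. (\<Sum>x\<in>?B. \<Sum>m\<in>?B - {x}. ennreal c * indicator (confusion_event Nr Nt x m) H) \<partial>?M)"
    unfolding P_ver_inf_def by (intro nn_integral_mono) auto
  also have "\<dots> = (\<Sum>x\<in>?B. \<Sum>m\<in>?B - {x}. ennreal c * emeasure ?M (confusion_event Nr Nt x m))"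
    using confusion_event_sets[OF assms] by (simp add: nn_integral_sum nn_integral_cmult_indicator)
  finally show ?thesis by (simp add: c_def)
qed

theorem proposition4:
  fixes Nt Nr :: nat
  assumes "Nt \<ge> 1" and "Nr \<ge> 1"
  shows "P_ver_inf Nr Nt \<le> ennreal ((1/2) * (\<Sum>d=1..Nt. real (Nt choose d) *
           ((2 / pi) * arctan (sqrt ((real Nt - real d) / real d))) ^ (2 * Nr)))"
proof -
  let ?B = "bpsk_set Nt"
  define c where "c = 1 / (2 * real (card ?B))"
  define q where "q d = collision_prob Nt d ^ (2 * Nr)" for d
  have c0: "0 \<le> c" by (simp add: c_def)
  have q0: "0 \<le> q d" for d by (simp add: q_def power_mult)
  have "P_ver_inf Nr Nt
      \<le> (\<Sum>x\<in>?B. \<Sum>m\<in>?B - {x}. ennreal c * emeasure (chan_measure Nr Nt) (confusion_event Nr Nt x m))"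
    unfolding c_def by (rule P_ver_inf_le_sum_confusion[OF assms(2)])
  also have "\<dots> \<le> (\<Sum>x\<in>?B. \<Sum>m\<in>?B - {x}. ennreal c * ennreal (q (hamming_dist Nt x m)))"
    unfolding q_def by (intro sum_mono mult_left_mono emeasure_confusion_event_le assms) auto
  also have "\<dots> = ennreal (\<Sum>x\<in>?B. c * (\<Sum>m\<in>?B - {x}. q (hamming_dist Nt x m)))"
    using c0 q0 by (simp add: ennreal_double_sum ennreal_mult sum_distrib_left)
  also have "\<dots> = ennreal (\<Sum>x\<in>?B. c * (\<Sum>d=1..Nt. real (Nt choose d) * q d))"
    by (simp add: sum_hamming_dist_eq_binomial)
  also have "\<dots> = ennreal ((1/2) * (\<Sum>d=1..Nt. real (Nt choose d) * q d))"
    using finite_bpsk_set bpsk_set_nonempty by (simp add: c_def)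
  finally show ?thesis by (simp add: q_def collision_prob_def)
qed

end
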